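(* In the mixture setting, let $W$ be any measurable real-valued function on the space of component parameters. For $\theta$ with components $(\xi_1,\dots,\xi_G)$ let $\rho_\theta$ be the permutation that sorts the components by $W$ in nondecreasing order (ties broken by the original index), so that $P_{\rho_\theta}(\theta)$ has $W$-values nondecreasing in the component index. For each permutation $\sigma$ of $\{1,\dots,G\}$ define the ordering map $\psi_\sigma(\theta)=P_{\sigma}(P_{\rho_\theta}(\theta))$, so that the components $\xi'_1,\dots,\xi'_G$ of $\psi_\sigma(\theta)$ satisfy $W(\xi'_{\sigma^{-1}(1)})\le\dots\le W(\xi'_{\sigma^{-1}(G)})$. Let $E=E_{\hat\theta,\hat\Sigma,c}$ and $B=B_{\hat\theta,\hat\Sigma,c,\alpha}\subseteq E$. Define the $G\times G$ matrix $\Delta$ by $\Delta_{g_1,g_2}=1$ if $W(\xi_{g_1})<W(\xi_{g_2})$ for every $\theta\in E$, and $\Delta_{g_1,g_2}=0$ otherwise; let $\Omega$ be the set of permutations $\sigma$ such that the sequence $(\sigma^{-1}(1),\dots,\sigma^{-1}(G))$ is a topological ordering of the directed graph with adjacency matrix $\Delta$ (i.e. $g_1$ appears before $g_2$ whenever $\Delta_{g_1,g_2}=1$). Then for every sample $\theta^{(T/2+1)\star},\dots,\theta^{(T)\star}$, $$\frac{1}{G!}\sum_{\sigma}\frac{1}{T/2}\sum_{\substack{t=T/2+1\\P_\sigma(\theta^{(t)\star})\in B}}^T\frac{1/V(B)}{\pi(\theta^{(t)\star})L(\theta^{(t)\star})}=\frac{1}{G!}\sum_{\sigma\in\Omega}\frac{1}{T/2}\sum_{\substack{t=T/2+1\\\psi_\sigma(\theta^{(t)\star})\in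 B}}^T\frac{1/V(B)}{\pi(\theta^{(t)\star})L(\theta^{(t)\star})},$$ where the left-hand sum is over all $G!$ permutations.
   Context: Mixture model with parameter $\theta=(\xi_1,\dots,\xi_G,\tau_1,\dots,\tau_{G-1})\in\mathbb{R}^R$, prior $\pi$, likelihood $L$. For a permutation $\sigma$ of $\{1,\dots,G\}$, $P_\sigma$ is the relabelling map sending $\theta$ to the parameter with components $(\xi_{\sigma(1)},\dots,\xi_{\sigma(G)})$ and proportions $(\tau_{\sigma(1)},\dots,\tau_{\sigma(G)})$, $\tau_G=1-\sum_{g<G}\tau_g$. $E_{\hat\theta,\hat\Sigma,c}=\{\theta:(\theta-\hat\theta)^\top\hat\Sigma^{-1}(\theta-\hat\theta)<c^2\}$ for a vector $\hat\theta$, positive definite $\hat\Sigma$ and $c>0$; $B_{\hat\theta,\hat\Sigma,c,\alpha}=E_{\hat\theta,\hat\Sigma,c}\cap\{\theta:\pi(\theta)L(\theta)>\hat q_\alpha\}$ for a threshold $\hat q_\alpha>0$, with $0<V(B)<\infty$. In the paper $W$ is built from quadratic discriminant analysis, but any measurable $W$ is allowed. *)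

theory Defs
  imports "HOL-Analysis.Analysis"
begin

text \<open>A fixed coordinate layout:
  cx g k is the coordinate of the k-th entry of component xi_g (g in 1..G),
  ct g is the coordinate of the proportion tau_g (g in 1..G-1).\<close>

definition layout :: "nat \<Rightarrow> (nat \<Rightarrow> 'd::finite \<Rightarrow> 'r::finite) \<Rightarrow> (nat \<Rightarrow> 'r) \<Rightarrow> bool" where
  "layout G cx ct \<longleftrightarrow>
     inj_on (\<lambda>(g,k). cx g k) ({1..G} \<times> UNIV) \<and> inj_on ct {1..<G} \<and>
     (\<forall>g\<in>{1..G}. \<forall>k. \<forall>h\<in>{1..<G}. cx g k \<noteq> ct h) \<and>
     (\<forall>i. (\<exists>g\<in>{1..G}. \<exists>k. i = cx g k) \<or> (\<exists>h\<in>{1..<G}. i = ct h))"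

definition comp :: "(nat \<Rightarrow> 'd::finite \<Rightarrow> 'r::finite) \<Rightarrow> real^'r \<Rightarrow> nat \<Rightarrow> real^'d" where
  "comp cx \<theta> g = (\<chi> k. \<theta> $ cx g k)"

definition tau :: "nat \<Rightarrow> (nat \<Rightarrow> 'r::finite) \<Rightarrow> real^'r \<Rightarrow> nat \<Rightarrow> real" where
  "tau G ct \<theta> g = (if g < G then \<theta> $ ct g else 1 - (\<Sum>h\<in>{1..<G}. \<theta> $ ct h))"

text \<open>Relabelling map P_sigma: components (xi_{sigma 1},...,xi_{sigma G}),
  proportions (tau_{sigma 1},...,tau_{sigma (G-1)}).\<close>
definition relabel :: "nat \<Rightarrow> (nat \<Rightarrow> 'd::finite \<Rightarrow> 'r::finite) \<Rightarrow> (nat \<Rightarrow> 'r) \<Rightarrow> (nat \<Rightarrow> nat)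
     \<Rightarrow> real^'r \<Rightarrow> real^'r" where
  "relabel G cx ct \<sigma> \<theta> = (\<chi> i.
     if (\<exists>g\<in>{1..G}. \<exists>k. i = cx g k)
     then (case (THE (g,k). g \<in> {1..G} \<and> i = cx g k) of (g,k) \<Rightarrow> \<theta> $ cx (\<sigma> g) k)
     else tau G ct \<theta> (\<sigma> (THE h. h \<in> {1..<G} \<and> i = ct h)))"

definition sortperm :: "nat \<Rightarrow> (real^'d::finite \<Rightarrow> real) \<Rightarrow> (nat \<Rightarrow> 'd \<Rightarrow> 'r::finite) \<Rightarrow> real^'r \<Rightarrow> (nat \<Rightarrow> nat)" where
  "sortperm G W cx \<theta> = (THE \<rho>. \<rho> permutes {1..G} \<and>
     (\<forall>g\<in>{1..G}. \<forall>h\<in>{1..G}. g < h \<longrightarrow>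
        W (comp cx \<theta> (\<rho> g)) < W (comp cx \<theta> (\<rho> h)) \<or>
        (W (comp cx \<theta> (\<rho> g)) = W (comp cx \<theta> (\<rho> h)) \<and> \<rho> g < \<rho> h)))"

definition psi :: "nat \<Rightarrow> (real^'d::finite \<Rightarrow> real) \<Rightarrow> (nat \<Rightarrow> 'd \<Rightarrow> 'r::finite) \<Rightarrow> (nat \<Rightarrow> 'r)
     \<Rightarrow> (nat \<Rightarrow> nat) \<Rightarrow> real^'r \<Rightarrow> real^'r" where
  "psi G W cx ct \<sigma> \<theta> = relabel G cx ct \<sigma> (relabel G cx ct (sortperm G W cx \<theta>) \<theta>)"

definition pos_def_mat :: "real^'n^'n \<Rightarrow> bool" where
  "pos_def_mat S \<longleftrightarrow> transpose S = S \<and> (\<forall>x. x \<noteq> 0 \<longrightarrow> x \<bullet> (S *v x) > 0)"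

definition ellipsoid :: "real^'r \<Rightarrow> real^'r^'r \<Rightarrow> real \<Rightarrow> (real^'r) set" where
  "ellipsoid th S c = {\<theta>. (\<theta> - th) \<bullet> (matrix_inv S *v (\<theta> - th)) < c\<^sup>2}"

definition Bset :: "real^'r \<Rightarrow> real^'r^'r \<Rightarrow> real \<Rightarrow> (real^'r \<Rightarrow> real) \<Rightarrow> (real^'r \<Rightarrow> real) \<Rightarrow> real \<Rightarrow> (real^'r) set" where
  "Bset th S c prior lik q = ellipsoid th S c \<inter> {\<theta>. prior \<theta> * lik \<theta> > q}"

text \<open>Delta matrix and the set Omega of permutations compatible with its topological order.
  Position of g in the sequence (sigma^-1 1, ..., sigma^-1 G) is sigma g.\<close>
definition Delta :: "(real^'d::finite \<Rightarrow> real) \<Rightarrow> (nat \<Rightarrow> 'd \<Rightarrow> 'r::finite) \<Rightarrow> (real^'r) set \<Rightarrow> nat \<Rightarrow> nat \<Rightarrow> bool" where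
  "Delta W cx E g1 g2 \<longleftrightarrow> (\<forall>\<theta>\<in>E. W (comp cx \<theta> g1) < W (comp cx \<theta> g2))"

definition Omega :: "nat \<Rightarrow> (real^'d::finite \<Rightarrow> real) \<Rightarrow> (nat \<Rightarrow> 'd \<Rightarrow> 'r::finite) \<Rightarrow> (real^'r) set \<Rightarrow> (nat \<Rightarrow> nat) set" where
  "Omega G W cx E = {\<sigma>. \<sigma> permutes {1..G} \<and>
     (\<forall>g1\<in>{1..G}. \<forall>g2\<in>{1..G}. Delta W cx E g1 g2 \<longrightarrow> \<sigma> g1 < \<sigma> g2)}"

end

(*
  For a fixed sample theta, let rho be its sorting permutation; then psi_sigma(theta) is
  the relabelling of theta by rho o sigma, and sigma |-> rho o sigma is a bijection of the
  permutations of {1..G}.  If psi_sigma(theta) lies in B, it lies in E, and the components of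
  psi_sigma(theta) are W-sorted along sigma; a strict W-inequality holding on all of E therefore
  forces the corresponding sigma-order, i.e. sigma is in Omega.  Hence for every sample the
  number of permutations relabelling it into B equals the number of sigma in Omega with
  psi_sigma(theta) in B, and exchanging the sums over permutations and samples gives the
  identity.
*)
theory Submission
  imports Defs
begin

definition sorting_perm :: "(nat \<Rightarrow> nat \<Rightarrow> bool) \<Rightarrow> nat \<Rightarrow> (nat \<Rightarrow> nat) \<Rightarrow> bool" where
  "sorting_perm r G \<rho> \<longleftrightarrow>
     \<rho> permutes {1..G} \<and> (\<forall>g\<in>{1..G}. \<forall>h\<in>{1..G}. g < h \<longrightarrow> r (\<rho> g) (\<rho> h))"

text \<open>The sorting permutation is the inverse of this rank function.\<close>

definition order_rank :: "(nat \<Rightarrow> nat \<Rightarrow> bool) \<Rightarrow> nat \<Rightarrow> nat \<Rightarrow> nat" where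
  "order_rank r G h = (if h \<in> {1..G} then Suc (card {h'\<in>{1..G}. r h' h}) else h)"

context
  fixes r :: "nat \<Rightarrow> nat \<Rightarrow> bool" and G :: nat
  assumes r_irrefl: "\<And>x. \<not> r x x"
    and r_trans: "\<And>x y z. r x y \<Longrightarrow> r y z \<Longrightarrow> r x z"
    and r_total: "\<And>x y. x \<in> {1..G} \<Longrightarrow> y \<in> {1..G} \<Longrightarrow> x \<noteq> y \<Longrightarrow> r x y \<or> r y x"
begin

lemma order_rank_in_range:
  assumes "h \<in> {1..G}"
  shows "order_rank r G h \<in> {1..G}"
proof -
  have "card {h'\<in>{1..G}. r h' h} \<le> card ({1..G} - {h})"
    using r_irrefl by (intro card_mono) auto
  with assms show ?thesis by (simp add: order_rank_def) linarith
qed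

lemma order_rank_strict_mono:
  assumes "h1 \<in> {1..G}" "h2 \<in> {1..G}" "r h1 h2"
  shows "order_rank r G h1 < order_rank r G h2"
proof -
  have "{h'\<in>{1..G}. r h' h1} \<subset> {h'\<in>{1..G}. r h' h2}"
    using assms r_irrefl r_trans[of _ h1 h2] by auto
  then have "card {h'\<in>{1..G}. r h' h1} < card {h'\<in>{1..G}. r h' h2}"
    by (intro psubset_card_mono) auto
  with assms show ?thesis by (simp add: order_rank_def)
qed

lemma order_rank_permutes: "order_rank r G permutes {1..G}"
proof (rule inj_imp_permutes)
  show "inj_on (order_rank r G) {1..G}"
    by (rule inj_onI) (metis r_total order_rank_strict_mono less_irrefl)
  show "order_rank r G h \<in> {1..G}" if "h \<in> {1..G}" for h
    using order_rank_in_range[OF that] .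
qed (auto simp: order_rank_def)

lemma order_rank_sorting_perm:
  assumes "sorting_perm r G \<rho>" "a \<in> {1..G}"
  shows "order_rank r G (\<rho> a) = a"
proof -
  have \<rho>: "\<rho> permutes {1..G}" and sorted: "\<forall>g\<in>{1..G}. \<forall>h\<in>{1..G}. g < h \<longrightarrow> r (\<rho> g) (\<rho> h)"
    using assms(1) by (auto simp: sorting_perm_def)
  have before_a: "r (\<rho> b) (\<rho> a) \<longleftrightarrow> b < a" if b: "b \<in> {1..G}" for b
  proof
    assume "b < a"
    then show "r (\<rho> b) (\<rho> a)" using sorted b assms(2) by blast
  next
    assume r_ba: "r (\<rho> b) (\<rho> a)"
    show "b < a"
    proof (rule ccontr)
      assume "\<not> b < a"
      then consider "a = b" | "a < b" by linarith
      then show False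
      proof cases
        case 1
        then show False using r_ba r_irrefl by simp
      next
        case 2
        then have "r (\<rho> a) (\<rho> b)" using sorted b assms(2) by blast
        then show False using r_ba r_irrefl r_trans by blast
      qed
    qed
  qed
  have "{h\<in>{1..G}. r h (\<rho> a)} = \<rho> ` {1..<a}"
  proof -
    have "{h\<in>{1..G}. r h (\<rho> a)} = \<rho> ` {b\<in>{1..G}. r (\<rho> b) (\<rho> a)}"
      using Compr_image_eq[of \<rho> "{1..G}" "\<lambda>h. r h (\<rho> a)"] unfolding permutes_image[OF \<rho>] .
    also have "{b\<in>{1..G}. r (\<rho> b) (\<rho> a)} = {1..<a}"
      using before_a assms(2) by auto
    finally show ?thesis .
  qed
  moreover have "inj_on \<rho> {1..<a}"
    using permutes_inj[OF \<rho>] by (auto intro: inj_on_subset)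
  ultimately show ?thesis
    using assms(2) permutes_in_image[OF \<rho>] by (simp add: order_rank_def card_image)
qed

lemma sorting_perm_ex1: "\<exists>!\<rho>. sorting_perm r G \<rho>"
proof (rule ex1I)
  let ?\<rho> = "inv (order_rank r G)"
  have \<rho>: "?\<rho> permutes {1..G}"
    by (rule permutes_inv[OF order_rank_permutes])
  show "sorting_perm r G ?\<rho>"
    unfolding sorting_perm_def
  proof (intro conjI \<rho> ballI impI)
    fix g h assume gh: "g \<in> {1..G}" "h \<in> {1..G}" "g < h"
    then have in_range: "?\<rho> g \<in> {1..G}" "?\<rho> h \<in> {1..G}"
      using permutes_in_image[OF \<rho>] by auto
    have order_rank_\<rho>: "order_rank r G (?\<rho> g) = g" "order_rank r G (?\<rho> h) = h"
      by (simp_all add: permutes_inverses(1)[OF order_rank_permutes])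
    with gh(3) have ne: "?\<rho> g \<noteq> ?\<rho> h"
      by auto
    have "\<not> r (?\<rho> h) (?\<rho> g)"
      using order_rank_strict_mono[OF in_range(2,1)] order_rank_\<rho> gh(3) by auto
    then show "r (?\<rho> g) (?\<rho> h)"
      using r_total[OF in_range ne] by blast
  qed
  fix \<rho> assume sorting: "sorting_perm r G \<rho>"
  then have \<rho>': "\<rho> permutes {1..G}" by (simp add: sorting_perm_def)
  show "\<rho> = ?\<rho>"
  proof
    fix a show "\<rho> a = ?\<rho> a"
    proof (cases "a \<in> {1..G}")
      case True
      then show ?thesis
        using order_rank_sorting_perm[OF sorting] permutes_inverses(2)[OF order_rank_permutes] by metis
    next
      case False
      then show ?thesis
        using permutes_not_in[OF \<rho>'] permutes_not_in[OF \<rho>] by metis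
    qed
  qed
qed

end

lemma card_permutes_compose_left:
  assumes q: "q permutes S"
  shows "card {p. p permutes S \<and> P (q \<circ> p)} = card {p. p permutes S \<and> P p}"
proof (rule bij_betw_same_card[of "(\<circ>) q"], rule bij_betw_byWitness[of _ "(\<circ>) (inv q)"])
  show "\<forall>p\<in>{p. p permutes S \<and> P (q \<circ> p)}. inv q \<circ> (q \<circ> p) = p"
    by (simp add: o_assoc permutes_inv_o(2)[OF q])
  show "\<forall>p\<in>{p. p permutes S \<and> P p}. q \<circ> (inv q \<circ> p) = p"
    by (simp add: o_assoc permutes_inv_o(1)[OF q])
  show "(\<circ>) q ` {p. p permutes S \<and> P (q \<circ> p)} \<subseteq> {p. p permutes S \<and> P p}"
    using permutes_compose[OF _ q] by auto
  show "(\<circ>) (inv q) ` {p. p permutes S \<and> P p} \<subseteq> {p. p permutes S \<and> P (q \<circ> p)}"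
    using permutes_compose[OF _ permutes_inv[OF q]] by (auto simp: o_assoc permutes_inv_o(1)[OF q])
qed

lemma relabel_cx:
  assumes L: "layout G cx ct" and g: "g \<in> {1..G}"
  shows "relabel G cx ct \<sigma> \<theta> $ cx g k = \<theta> $ cx (\<sigma> g) k"
proof -
  have inj: "inj_on (\<lambda>(g,k). cx g k) ({1..G} \<times> UNIV)"
    using L by (simp add: layout_def)
  have "(THE (g',k'). g' \<in> {1..G} \<and> cx g k = cx g' k') = (g,k)"
  proof (rule the_equality)
    fix p assume p: "case p of (g',k') \<Rightarrow> g' \<in> {1..G} \<and> cx g k = cx g' k'"
    show "p = (g,k)"
    proof (cases p)
      case (Pair a b)
      with p g show ?thesis
        using inj_onD[OF inj, of "(g,k)" "(a,b)"] by auto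
    qed
  qed (use g in simp)
  with g show ?thesis
    unfolding relabel_def by auto
qed

lemma relabel_ct:
  assumes L: "layout G cx ct" and h: "h \<in> {1..<G}"
  shows "relabel G cx ct \<sigma> \<theta> $ ct h = tau G ct \<theta> (\<sigma> h)"
proof -
  have inj: "inj_on ct {1..<G}" and disjoint: "\<forall>g\<in>{1..G}. \<forall>k. \<forall>h\<in>{1..<G}. cx g k \<noteq> ct h"
    using L by (simp_all add: layout_def)
  have "(THE h'. h' \<in> {1..<G} \<and> ct h = ct h') = h"
    using inj h by (intro the_equality) (auto dest: inj_onD)
  moreover have "\<not> (\<exists>g\<in>{1..G}. \<exists>k. ct h = cx g k)"
    using disjoint h by metis
  ultimately show ?thesis
    unfolding relabel_def by simp
qed

lemma comp_relabel:
  assumes "layout G cx ct" and "g \<in> {1..G}"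
  shows "comp cx (relabel G cx ct \<sigma> \<theta>) g = comp cx \<theta> (\<sigma> g)"
  using relabel_cx[OF assms] by (simp add: comp_def)

lemma sum_tau:
  assumes "G \<ge> 1"
  shows "(\<Sum>g\<in>{1..G}. tau G ct \<theta> g) = 1"
proof -
  have "(\<Sum>g\<in>{1..<G}. tau G ct \<theta> g) = (\<Sum>g\<in>{1..<G}. \<theta> $ ct g)"
    by (rule sum.cong) (simp_all add: tau_def)
  then show ?thesis
    using sum.last_plus[OF assms, of "tau G ct \<theta>"] by (simp add: tau_def)
qed

text \<open>The last proportion is not a coordinate of theta; it is recovered because a relabelling
  only permutes the proportions, so their sum stays 1.\<close>

lemma tau_relabel:
  assumes L: "layout G cx ct" and G: "G \<ge> 1" and \<sigma>: "\<sigma> permutes {1..G}" and g: "g \<in> {1..G}"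
  shows "tau G ct (relabel G cx ct \<sigma> \<theta>) g = tau G ct \<theta> (\<sigma> g)"
proof (cases "g < G")
  case True
  with g show ?thesis
    by (simp add: tau_def relabel_ct[OF L])
next
  case False
  with g have "g = G" by simp
  have "(\<Sum>h\<in>{1..G}. tau G ct \<theta> (\<sigma> h)) = (\<Sum>g\<in>{1..G}. tau G ct \<theta> g)"
    using sum.permute[OF \<sigma>, of "tau G ct \<theta>"] by (simp add: comp_def)
  also have "\<dots> = 1"
    by (rule sum_tau[OF G])
  finally have "tau G ct \<theta> (\<sigma> G) = 1 - (\<Sum>h\<in>{1..<G}. tau G ct \<theta> (\<sigma> h))"
    using sum.last_plus[OF G, of "\<lambda>h. tau G ct \<theta> (\<sigma> h)"] by simp
  also have "(\<Sum>h\<in>{1..<G}. tau G ct \<theta> (\<sigma> h)) = (\<Sum>h\<in>{1..<G}. relabel G cx ct \<sigma> \<theta> $ ct h)"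
    by (rule sum.cong) (simp_all add: relabel_ct[OF L])
  finally show ?thesis
    using \<open>g = G\<close> by (simp add: tau_def)
qed

lemma relabel_relabel:
  assumes L: "layout G cx ct" and G: "G \<ge> 1" and \<sigma>: "\<sigma> permutes {1..G}" and \<rho>: "\<rho> permutes {1..G}"
  shows "relabel G cx ct \<sigma> (relabel G cx ct \<rho> \<theta>) = relabel G cx ct (\<rho> \<circ> \<sigma>) \<theta>"
proof (rule vec_eq_iff[THEN iffD2], rule allI)
  fix i
  have "(\<exists>g\<in>{1..G}. \<exists>k. i = cx g k) \<or> (\<exists>h\<in>{1..<G}. i = ct h)"
    using L by (simp add: layout_def)
  then show "relabel G cx ct \<sigma> (relabel G cx ct \<rho> \<theta>) $ i = relabel G cx ct (\<rho> \<circ> \<sigma>) \<theta> $ i"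
  proof
    assume "\<exists>g\<in>{1..G}. \<exists>k. i = cx g k"
    then obtain g k where "g \<in> {1..G}" "i = cx g k" by blast
    moreover have "\<sigma> g \<in> {1..G}"
      using \<open>g \<in> {1..G}\<close> permutes_in_image[OF \<sigma>] by simp
    ultimately show ?thesis
      by (simp add: relabel_cx[OF L])
  next
    assume "\<exists>h\<in>{1..<G}. i = ct h"
    then obtain h where "h \<in> {1..<G}" "i = ct h" by blast
    moreover have "\<sigma> h \<in> {1..G}"
      using \<open>h \<in> {1..<G}\<close> permutes_in_image[OF \<sigma>] by simp
    ultimately show ?thesis
      by (simp add: relabel_ct[OF L] tau_relabel[OF L G \<rho>])
  qed
qed

definition sort_order :: "(real^'d::finite \<Rightarrow> real) \<Rightarrow> (nat \<Rightarrow> 'd \<Rightarrow> 'r::finite) \<Rightarrow> real^'r \<Rightarrow> nat \<Rightarrow> nat \<Rightarrow> bool" where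
  "sort_order W cx \<theta> a b \<longleftrightarrow>
     W (comp cx \<theta> a) < W (comp cx \<theta> b) \<or> (W (comp cx \<theta> a) = W (comp cx \<theta> b) \<and> a < b)"

lemma sortperm_eq_The_sorting_perm:
  "sortperm G W cx \<theta> = (THE \<rho>. sorting_perm (sort_order W cx \<theta>) G \<rho>)"
  by (simp add: sortperm_def sorting_perm_def sort_order_def)

lemma sortperm_sorting_perm: "sorting_perm (sort_order W cx \<theta>) G (sortperm G W cx \<theta>)"
proof -
  have "\<exists>!\<rho>. sorting_perm (sort_order W cx \<theta>) G \<rho>"
    by (rule sorting_perm_ex1) (auto simp: sort_order_def)
  then show ?thesis
    unfolding sortperm_eq_The_sorting_perm by (rule theI')
qed

lemma sortperm_permutes: "sortperm G W cx \<theta> permutes {1..G}"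
  using sortperm_sorting_perm[of W cx \<theta> G] by (simp add: sorting_perm_def)

lemma sortperm_sorted:
  assumes "g \<in> {1..G}" "h \<in> {1..G}" "g < h"
  shows "W (comp cx \<theta> (sortperm G W cx \<theta> g)) \<le> W (comp cx \<theta> (sortperm G W cx \<theta> h))"
proof -
  have "sort_order W cx \<theta> (sortperm G W cx \<theta> g) (sortperm G W cx \<theta> h)"
    using sortperm_sorting_perm[of W cx \<theta> G] assms unfolding sorting_perm_def by blast
  then show ?thesis
    by (auto simp: sort_order_def)
qed

lemma psi_eq_relabel_sortperm:
  assumes "layout G cx ct" "G \<ge> 1" "\<sigma> permutes {1..G}"
  shows "psi G W cx ct \<sigma> \<theta> = relabel G cx ct (sortperm G W cx \<theta> \<circ> \<sigma>) \<theta>"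
  unfolding psi_def using relabel_relabel[OF assms sortperm_permutes] .

lemma in_Omega_if_relabel_sortperm_in:
  assumes L: "layout G cx ct" and \<sigma>: "\<sigma> permutes {1..G}"
    and in_E: "relabel G cx ct (sortperm G W cx \<theta> \<circ> \<sigma>) \<theta> \<in> E"
  shows "\<sigma> \<in> Omega G W cx E"
proof -
  let ?\<rho> = "sortperm G W cx \<theta>"
  have "\<sigma> g1 < \<sigma> g2" if g: "g1 \<in> {1..G}" "g2 \<in> {1..G}" and "Delta W cx E g1 g2" for g1 g2
  proof (rule ccontr)
    assume "\<not> \<sigma> g1 < \<sigma> g2"
    moreover have "\<sigma> g1 \<in> {1..G}" "\<sigma> g2 \<in> {1..G}"
      using g permutes_in_image[OF \<sigma>] by auto
    ultimately have "W (comp cx \<theta> (?\<rho> (\<sigma> g2))) \<le> W (comp cx \<theta> (?\<rho> (\<sigma> g1)))"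
      using sortperm_sorted by (metis linorder_neqE_nat order_refl)
    moreover have "W (comp cx \<theta> (?\<rho> (\<sigma> g1))) < W (comp cx \<theta> (?\<rho> (\<sigma> g2)))"
      using \<open>Delta W cx E g1 g2\<close> in_E comp_relabel[OF L g(1)] comp_relabel[OF L g(2)]
      by (auto simp: Delta_def)
    ultimately show False
      by simp
  qed
  with \<sigma> show ?thesis
    by (simp add: Omega_def)
qed

lemma card_psi_in_eq_card_relabel_in:
  assumes L: "layout G cx ct" and G: "G \<ge> 1" and "B \<subseteq> E"
  shows "card {\<sigma> \<in> Omega G W cx E. psi G W cx ct \<sigma> \<theta> \<in> B}
       = card {\<tau>. \<tau> permutes {1..G} \<and> relabel G cx ct \<tau> \<theta> \<in> B}"
proof -
  let ?\<rho> = "sortperm G W cx \<theta>"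
  have "{\<sigma> \<in> Omega G W cx E. psi G W cx ct \<sigma> \<theta> \<in> B}
      = {\<sigma>. \<sigma> permutes {1..G} \<and> relabel G cx ct (?\<rho> \<circ> \<sigma>) \<theta> \<in> B}"
    using psi_eq_relabel_sortperm[OF L G] in_Omega_if_relabel_sortperm_in[OF L] \<open>B \<subseteq> E\<close>
    by (auto simp: Omega_def)
  then show ?thesis
    using card_permutes_compose_left[OF sortperm_permutes] by simp
qed

lemma sum_relabel_in_eq_sum_psi_in:
  fixes \<theta> :: "'i \<Rightarrow> real^'r::finite" and f :: "'i \<Rightarrow> real" and W :: "real^'d::finite \<Rightarrow> real"
  assumes L: "layout G cx ct" and G: "G \<ge> 1" and "B \<subseteq> E" and "finite I"
  shows "(\<Sum>\<sigma>\<in>{\<sigma>. \<sigma> permutes {1..G}}. \<Sum>t\<in>{t\<in>I. relabel G cx ct \<sigma> (\<theta> t) \<in> B}. f t)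
       = (\<Sum>\<sigma>\<in>Omega G W cx E. \<Sum>t\<in>{t\<in>I. psi G W cx ct \<sigma> (\<theta> t) \<in> B}. f t)"
proof -
  have fin_perms: "finite {\<sigma>. \<sigma> permutes {1..G}}"
    by (simp add: finite_permutations)
  moreover have "Omega G W cx E \<subseteq> {\<sigma>. \<sigma> permutes {1..G}}"
    by (auto simp: Omega_def)
  ultimately have fin_Omega: "finite (Omega G W cx E)"
    by (rule finite_subset[rotated])
  have "(\<Sum>\<sigma>\<in>{\<sigma>. \<sigma> permutes {1..G}}. \<Sum>t\<in>{t\<in>I. relabel G cx ct \<sigma> (\<theta> t) \<in> B}. f t)
      = (\<Sum>t\<in>I. card {\<sigma>. \<sigma> permutes {1..G} \<and> relabel G cx ct \<sigma> (\<theta> t) \<in> B} * f t)"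
    using sum.swap_restrict[OF fin_perms \<open>finite I\<close>, of "\<lambda>_. f" "\<lambda>\<sigma> t. relabel G cx ct \<sigma> (\<theta> t) \<in> B"]
    by simp
  also have "\<dots> = (\<Sum>t\<in>I. card {\<sigma> \<in> Omega G W cx E. psi G W cx ct \<sigma> (\<theta> t) \<in> B} * f t)"
    by (simp add: card_psi_in_eq_card_relabel_in[OF L G \<open>B \<subseteq> E\<close>])
  also have "\<dots> = (\<Sum>\<sigma>\<in>Omega G W cx E. \<Sum>t\<in>{t\<in>I. psi G W cx ct \<sigma> (\<theta> t) \<in> B}. f t)"
    using sum.swap_restrict[OF fin_Omega \<open>finite I\<close>, of "\<lambda>_. f" "\<lambda>\<sigma> t. psi G W cx ct \<sigma> (\<theta> t) \<in> B"]
    by simp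
  finally show ?thesis .
qed

theorem theorem4:
  fixes G T :: nat
    and W :: "real^'d::finite \<Rightarrow> real"
    and cx :: "nat \<Rightarrow> 'd \<Rightarrow> 'r::finite" and ct :: "nat \<Rightarrow> 'r"
    and prior lik :: "real^'r \<Rightarrow> real"
    and th :: "real^'r" and S :: "real^'r^'r" and c q :: real
    and smp :: "nat \<Rightarrow> real^'r"
  defines "E \<equiv> ellipsoid th S c"
    and "B \<equiv> Bset th S c prior lik q"
  assumes "G \<ge> 1" and "layout G cx ct"
    and "W \<in> borel_measurable borel"
    and "pos_def_mat S" and "c > 0" and "q > 0"
    and "0 < emeasure lborel B" and "emeasure lborel B < \<infinity>"
    and "even T"
  shows "1 / fact G * (\<Sum>\<sigma>\<in>{\<sigma>. \<sigma> permutes {1..G}}. 1 / (real T / 2) *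
           (\<Sum>t\<in>{t\<in>{T div 2 + 1..T}. relabel G cx ct \<sigma> (smp t) \<in> B}.
              (1 / measure lborel B) / (prior (smp t) * lik (smp t))))
       = 1 / fact G * (\<Sum>\<sigma>\<in>Omega G W cx E. 1 / (real T / 2) *
           (\<Sum>t\<in>{t\<in>{T div 2 + 1..T}. psi G W cx ct \<sigma> (smp t) \<in> B}.
              (1 / measure lborel B) / (prior (smp t) * lik (smp t))))"
proof -
  have "B \<subseteq> E"
    by (auto simp: B_def E_def Bset_def)
  then show ?thesis
    unfolding sum_distrib_left[symmetric]
    using sum_relabel_in_eq_sum_psi_in[OF \<open>layout G cx ct\<close> \<open>G \<ge> 1\<close> \<open>B \<subseteq> E\<close>, where W = W and \<theta> = smp
        and I = "{T div 2 + 1..T}" and f = "\<lambda>t. (1 / measure lborel B) / (prior (smp t) * lik (smp t))"]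
    by simp
qed

end
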